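(* Let $1<S\le N$, $L$ a band-width vector, $\dot W$ an $L$-admissible matrix, $W_\varepsilon=\mathrm{Id}+\varepsilon\dot W$, $k\in\mathbb N$, $\beta\in\Gamma$, $D_\beta=D_{k,\beta,L}$, $D_{-\beta}=\overline{D_\beta}=D_\beta^{-1}$, $P_{\varepsilon,\beta}=D_\beta W_\varepsilon$ (so $P_{\varepsilon,\beta}^*=W_\varepsilon D_{-\beta}$). Fix $\ell$ and $s_\ell$ with $\ell\in B_{s_\ell}$. Suppose that for $0<\varepsilon<\gamma$: $f^{(\ell)}_\varepsilon$ is a unit eigenvector of $P_{\varepsilon,\beta}$ with eigenvalue $\lambda^{(\ell)}_\varepsilon\to e^{-2\pi ik\beta_{s_\ell}}$; $\mu^{(\ell)}_\varepsilon$ satisfies $P^*_{\varepsilon,\beta}\mu^{(\ell)}_\varepsilon=\overline{\lambda^{(\ell)}_\varepsilon}\mu^{(\ell)}_\varepsilon$ and $\langle f^{(\ell)}_\varepsilon,\mu^{(\ell)}_\varepsilon\rangle=1$; and $f^{(\ell)}_\varepsilon\to f^{(\ell)}$, $\mu^{(\ell)}_\varepsilon\to f^{(\ell)}$ as $\varepsilon\to0$, where $f^{(\ell)}$ is a unit eigenvector of $D_\beta\hat W_L$. Then for each $j\in\{1,\dots,N\}\setminus B_{s_\ell}$, with $s_j$ such that $j\in B_{s_j}$, $$\lim_{\varepsilon\to0}\frac{(\mu^{(\ell)}_\varepsilon)_j-(f^{(\ell)})_j}{\varepsilon}=\lim_{\varepsilon\to0}\frac{(\mu^{(\ell)}_\varepsilon)_j}{\varepsilon}=\frac{1}{e^{2\pi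 ik\beta_{s_\ell}}-e^{2\pi ik\beta_{s_j}}}\bigl(\dot WD_{-\beta}f^{(\ell)}\bigr)_j.$$
   Context: A band-width vector is $L=(L_1,\dots,L_S)$ of positive integers with $\sum_sL_s=N$; $N_0=0$, $N_s=N_{s-1}+L_s$, $B_s=\{j:N_{s-1}<j\le N_s\}$. $D_{k,\beta,L}$ is the diagonal matrix with $j$-th entry $e^{-2\pi ik\beta_s}$ for $j\in B_s$. $\dot W$ is $L$-admissible if it is real symmetric and (1) $\dot W_{ij}\ge0$ for $i\ne j$, $\sum_j\dot W_{ij}=0$ for all $i$; (2) $\dot W$ has $N$ distinct eigenvalues; (3) each $\hat W_s=(\dot W_{jk})_{j,k\in B_s}$ has $L_s$ distinct eigenvalues. $\hat W_L$ is block diagonal with blocks $\hat W_s$. $\Gamma=\{\beta\in\mathbb R^S: e^{-2\pi ik\beta_{s_1}}\neq e^{-2\pi ik\beta_{s_2}}\text{ for all }k\ne0,\ s_1\ne s_2\}$. $\langle v,w\rangle=\sum_jv_j\overline{w_j}$; $P^*$ is the conjugate transpose. *)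

theory Defs
  imports Complex_Main
begin

text \<open>Vectors are functions nat => complex, matrices nat => nat => complex / real,
  indices range over {1..N} (or a block of it).\<close>

definition Nb :: "(nat \<Rightarrow> nat) \<Rightarrow> nat \<Rightarrow> nat" where
  "Nb L s = (\<Sum>t\<in>{1..s}. L t)"

definition band_block :: "(nat \<Rightarrow> nat) \<Rightarrow> nat \<Rightarrow> nat set" where
  "band_block L s = {j. Nb L (s - 1) < j \<and> j \<le> Nb L s}"

definition band_width_vector :: "nat \<Rightarrow> nat \<Rightarrow> (nat \<Rightarrow> nat) \<Rightarrow> bool" where
  "band_width_vector S N L \<longleftrightarrow> (\<forall>s\<in>{1..S}. 0 < L s) \<and> (\<Sum>s\<in>{1..S}. L s) = N"

definition block_index :: "(nat \<Rightarrow> nat) \<Rightarrow> nat \<Rightarrow> nat \<Rightarrow> nat" where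
  "block_index L S j = (THE s. s \<in> {1..S} \<and> j \<in> band_block L s)"

definition Dmat :: "int \<Rightarrow> (nat \<Rightarrow> real) \<Rightarrow> (nat \<Rightarrow> nat) \<Rightarrow> nat \<Rightarrow> nat \<Rightarrow> nat \<Rightarrow> complex" where
  "Dmat k \<beta> L S i j =
     (if i = j then exp (- 2 * pi * \<i> * of_int k * of_real (\<beta> (block_index L S j))) else 0)"

definition mat_vec :: "nat set \<Rightarrow> (nat \<Rightarrow> nat \<Rightarrow> complex) \<Rightarrow> (nat \<Rightarrow> complex) \<Rightarrow> nat \<Rightarrow> complex" where
  "mat_vec I A v = (\<lambda>i. \<Sum>j\<in>I. A i j * v j)"

definition mat_mul :: "nat set \<Rightarrow> (nat \<Rightarrow> nat \<Rightarrow> complex) \<Rightarrow> (nat \<Rightarrow> nat \<Rightarrow> complex) \<Rightarrow> nat \<Rightarrow> nat \<Rightarrow> complex" where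
  "mat_mul I A B = (\<lambda>i j. \<Sum>m\<in>I. A i m * B m j)"

definition adjoint :: "(nat \<Rightarrow> nat \<Rightarrow> complex) \<Rightarrow> nat \<Rightarrow> nat \<Rightarrow> complex" where
  "adjoint A = (\<lambda>i j. cnj (A j i))"

definition cmat :: "(nat \<Rightarrow> nat \<Rightarrow> real) \<Rightarrow> nat \<Rightarrow> nat \<Rightarrow> complex" where
  "cmat A = (\<lambda>i j. complex_of_real (A i j))"

definition cinner :: "nat set \<Rightarrow> (nat \<Rightarrow> complex) \<Rightarrow> (nat \<Rightarrow> complex) \<Rightarrow> complex" where
  "cinner I v w = (\<Sum>j\<in>I. v j * cnj (w j))"

definition vnorm :: "nat set \<Rightarrow> (nat \<Rightarrow> complex) \<Rightarrow> real" where
  "vnorm I v = sqrt (\<Sum>j\<in>I. (cmod (v j))\<^sup>2)"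

definition mat_eigenvalue :: "nat set \<Rightarrow> (nat \<Rightarrow> nat \<Rightarrow> complex) \<Rightarrow> complex \<Rightarrow> bool" where
  "mat_eigenvalue I A lam \<longleftrightarrow> (\<exists>v. (\<exists>j\<in>I. v j \<noteq> 0) \<and> (\<forall>i\<in>I. mat_vec I A v i = lam * v i))"

definition admissible :: "nat \<Rightarrow> nat \<Rightarrow> (nat \<Rightarrow> nat) \<Rightarrow> (nat \<Rightarrow> nat \<Rightarrow> real) \<Rightarrow> bool" where
  "admissible S N L W \<longleftrightarrow>
     (\<forall>i\<in>{1..N}. \<forall>j\<in>{1..N}. W i j = W j i) \<and>
     (\<forall>i\<in>{1..N}. \<forall>j\<in>{1..N}. i \<noteq> j \<longrightarrow> 0 \<le> W i j) \<and>
     (\<forall>i\<in>{1..N}. (\<Sum>j\<in>{1..N}. W i j) = 0) \<and>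
     card {lam. mat_eigenvalue {1..N} (cmat W) lam} = N \<and>
     (\<forall>s\<in>{1..S}. card {lam. mat_eigenvalue (band_block L s) (cmat W) lam} = L s)"

definition hatW :: "(nat \<Rightarrow> nat) \<Rightarrow> nat \<Rightarrow> (nat \<Rightarrow> nat \<Rightarrow> real) \<Rightarrow> nat \<Rightarrow> nat \<Rightarrow> real" where
  "hatW L S W = (\<lambda>i j. if block_index L S i = block_index L S j then W i j else 0)"

definition Gamma_set :: "nat \<Rightarrow> (nat \<Rightarrow> real) set" where
  "Gamma_set S = {\<beta>. \<forall>k::int. k \<noteq> 0 \<longrightarrow> (\<forall>s1\<in>{1..S}. \<forall>s2\<in>{1..S}. s1 \<noteq> s2 \<longrightarrow>
      exp (- 2 * pi * \<i> * of_int k * of_real (\<beta> s1)) \<noteq> exp (- 2 * pi * \<i> * of_int k * of_real (\<beta> s2)))}"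

definition Weps :: "real \<Rightarrow> (nat \<Rightarrow> nat \<Rightarrow> real) \<Rightarrow> nat \<Rightarrow> nat \<Rightarrow> real" where
  "Weps \<epsilon> W = (\<lambda>i j. (if i = j then 1 else 0) + \<epsilon> * W i j)"

end

theory Submission
  imports Defs
begin

text \<open>
  Since \<open>D\<close> is diagonal and
  \<open>W\<close> is symmetric, it reads \<open>(cnj \<lambda>\<^sub>\<epsilon> - cnj D\<^sub>j\<^sub>j) (\<mu>\<^sub>\<epsilon>)\<^sub>j = \<epsilon> (W D\<^sub>-\<^sub>\<beta> \<mu>\<^sub>\<epsilon>)\<^sub>j\<close>.
  As \<open>\<epsilon> \<rightarrow> 0\<close> the factor on the left tends to \<open>exp (2\<pi>ik\<beta>\<^sub>s\<^sub>l) - exp (2\<pi>ik\<beta>\<^sub>s\<^sub>j)\<close>,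
  which is nonzero because \<open>\<beta> \<in> \<Gamma>\<close> and \<open>s\<^sub>j \<noteq> s\<^sub>l\<close>, while the right-hand side divided by
  \<open>\<epsilon>\<close> tends to \<open>(W D\<^sub>-\<^sub>\<beta> f)\<^sub>j\<close>. Dividing gives the limit of \<open>(\<mu>\<^sub>\<epsilon>)\<^sub>j / \<epsilon>\<close>; in particular
  \<open>(\<mu>\<^sub>\<epsilon>)\<^sub>j \<rightarrow> 0\<close>, so \<open>f\<^sub>j = 0\<close> and the two difference quotients coincide.
\<close>

lemma Nb_mono: "a \<le> b \<Longrightarrow> Nb L a \<le> Nb L b"
  unfolding Nb_def by (rule sum_mono2) auto

lemma band_block_unique:
  assumes "j \<in> band_block L s" "j \<in> band_block L t"
  shows "s = t"
proof (rule ccontr)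
  assume "s \<noteq> t"
  then consider "s < t" | "t < s" by linarith
  then show False
  proof cases
    case 1
    hence "Nb L s \<le> Nb L (t - 1)" by (intro Nb_mono) auto
    then show False using assms unfolding band_block_def by auto
  next
    case 2
    hence "Nb L t \<le> Nb L (s - 1)" by (intro Nb_mono) auto
    then show False using assms unfolding band_block_def by auto
  qed
qed

lemma band_block_exists:
  assumes bw: "band_width_vector S N L" and j: "j \<in> {1..N}"
  shows "\<exists>s\<in>{1..S}. j \<in> band_block L s"
proof -
  have "j \<le> Nb L S" using bw j unfolding band_width_vector_def Nb_def by simp
  define s where "s = (LEAST s. j \<le> Nb L s)"
  have s_upper: "j \<le> Nb L s" unfolding s_def by (rule LeastI) fact
  have s_le: "s \<le> S" unfolding s_def by (rule Least_le) fact
  have s_pos: "s \<noteq> 0" using s_upper j by (cases "s = 0") (auto simp: Nb_def)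
  have s_lower: "\<not> j \<le> Nb L (s - 1)"
  proof
    assume "j \<le> Nb L (s - 1)"
    hence "s \<le> s - 1" unfolding s_def by (rule Least_le)
    thus False using s_pos by simp
  qed
  show ?thesis using s_pos s_upper s_le s_lower by (auto simp: band_block_def intro!: bexI[of _ s])
qed

lemma block_index_in_band_block:
  assumes "band_width_vector S N L" "j \<in> {1..N}"
  shows "block_index L S j \<in> {1..S}" "j \<in> band_block L (block_index L S j)"
proof -
  obtain s where s: "s \<in> {1..S}" "j \<in> band_block L s" using band_block_exists[OF assms] by blast
  have "block_index L S j = s" unfolding block_index_def
    by (rule the_equality) (use s band_block_unique in auto)
  thus "block_index L S j \<in> {1..S}" "j \<in> band_block L (block_index L S j)" using s by simp_all
qed

lemma Gamma_set_exp_neq: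
  assumes "\<beta> \<in> Gamma_set S" "0 < k" "s \<in> {1..S}" "t \<in> {1..S}" "s \<noteq> t"
  shows "exp (2 * pi * \<i> * of_nat k * of_real (\<beta> s)) \<noteq> exp (2 * pi * \<i> * of_nat k * of_real (\<beta> t))"
proof -
  have "- int k \<noteq> 0" using \<open>0 < k\<close> by simp
  with assms have "exp (- 2 * pi * \<i> * of_int (- int k) * of_real (\<beta> s)) \<noteq>
      exp (- 2 * pi * \<i> * of_int (- int k) * of_real (\<beta> t))"
    unfolding Gamma_set_def by blast
  thus ?thesis by simp
qed

lemma cnj_exp: "cnj (exp z) = exp (cnj z)"
  by (simp add: cis_cnj exp_eq_polar)

lemma cnj_Dmat_diag:
  "cnj (Dmat (int k) \<beta> L S j j) = exp (2 * pi * \<i> * of_nat k * of_real (\<beta> (block_index L S j)))"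
  by (simp add: Dmat_def cnj_exp)

lemma mat_mul_Dmat_left:
  assumes "finite I" "i \<in> I"
  shows "mat_mul I (Dmat k \<beta> L S) B i j = Dmat k \<beta> L S i i * B i j"
  unfolding mat_mul_def Dmat_def using assms by (simp add: if_distrib[where f="\<lambda>x. x * _"] cong: if_cong)

lemma mat_mul_cnj_Dmat_right:
  assumes "finite I" "j \<in> I"
  shows "mat_mul I A (\<lambda>a b. cnj (Dmat k \<beta> L S a b)) i j = A i j * cnj (Dmat k \<beta> L S j j)"
  unfolding mat_mul_def Dmat_def using assms by (simp add: if_distrib[where f="\<lambda>x. _ * cnj x"] cong: if_cong)

lemma mat_vec_adjoint_Dmat_Weps:
  fixes W :: "nat \<Rightarrow> nat \<Rightarrow> real" and k :: int and \<beta> :: "nat \<Rightarrow> real"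
    and L :: "nat \<Rightarrow> nat" and S :: nat
  defines "D \<equiv> Dmat k \<beta> L S"
  assumes I: "finite I" "j \<in> I" and W_sym: "\<And>b. b \<in> I \<Longrightarrow> W b j = W j b"
  shows "mat_vec I (adjoint (mat_mul I D (cmat (Weps \<epsilon> W)))) v j
       = cnj (D j j) * v j + of_real \<epsilon> * mat_vec I (mat_mul I (cmat W) (\<lambda>a b. cnj (D a b))) v j"
proof -
  have row: "adjoint (mat_mul I D (cmat (Weps \<epsilon> W))) j b * v b
      = (if b = j then cnj (D j j) * v j else 0)
        + of_real \<epsilon> * (mat_mul I (cmat W) (\<lambda>a b. cnj (D a b)) j b * v b)" if "b \<in> I" for b
    using that W_sym[OF that]
    by (simp add: D_def adjoint_def cmat_def Weps_def mat_mul_Dmat_left[OF I(1)]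
        mat_mul_cnj_Dmat_right[OF I(1)] algebra_simps)
  show ?thesis
    unfolding mat_vec_def using I
    by (simp add: row sum.distrib sum_distrib_left cong: sum.cong)
qed

lemma tendsto_mat_vec:
  assumes "finite I" "\<And>j. j \<in> I \<Longrightarrow> ((\<lambda>x. v x j) \<longlongrightarrow> w j) F"
  shows "((\<lambda>x. mat_vec I A (v x) i) \<longlongrightarrow> mat_vec I A w i) F"
  unfolding mat_vec_def using assms by (intro tendsto_intros) auto

lemma tendsto_quotient_at_right_0:
  fixes a A \<mu> :: "real \<Rightarrow> 'a::real_normed_field"
  assumes eq: "\<forall>\<^sub>F \<epsilon> in at_right 0. (a \<epsilon> - d) * \<mu> \<epsilon> = of_real \<epsilon> * A \<epsilon>"
    and a: "(a \<longlongrightarrow> a0) (at_right 0)" and ne: "a0 \<noteq> d"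
    and A: "(A \<longlongrightarrow> A0) (at_right 0)"
  shows "((\<lambda>\<epsilon>. \<mu> \<epsilon> / of_real \<epsilon>) \<longlongrightarrow> A0 / (a0 - d)) (at_right 0)"
proof -
  have a_d: "((\<lambda>\<epsilon>. a \<epsilon> - d) \<longlongrightarrow> a0 - d) (at_right 0)" by (intro tendsto_intros a)
  have "\<forall>\<^sub>F \<epsilon> in at_right 0. a \<epsilon> - d \<noteq> 0"
    using tendsto_imp_eventually_ne[OF a_d, of 0] ne by simp
  moreover have "\<forall>\<^sub>F \<epsilon> in at_right (0::real). 0 < \<epsilon>" by (simp add: eventually_at_right_less)
  ultimately have "\<forall>\<^sub>F \<epsilon> in at_right 0. A \<epsilon> / (a \<epsilon> - d) = \<mu> \<epsilon> / of_real \<epsilon>"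
    using eq by eventually_elim (simp add: field_simps)
  moreover have "((\<lambda>\<epsilon>. A \<epsilon> / (a \<epsilon> - d)) \<longlongrightarrow> A0 / (a0 - d)) (at_right 0)"
    using ne by (intro tendsto_divide A a_d) simp
  ultimately show ?thesis by (rule Lim_transform_eventually[rotated])
qed

lemma tendsto_zero_of_quotient_at_right_0:
  fixes \<mu> :: "real \<Rightarrow> 'a::real_normed_field"
  assumes "((\<lambda>\<epsilon>. \<mu> \<epsilon> / of_real \<epsilon>) \<longlongrightarrow> c) (at_right 0)"
  shows "(\<mu> \<longlongrightarrow> 0) (at_right 0)"
proof -
  have "((\<lambda>\<epsilon>. of_real \<epsilon> * (\<mu> \<epsilon> / of_real \<epsilon>)) \<longlongrightarrow> of_real 0 * c) (at_right (0::real))"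
    by (intro tendsto_mult assms tendsto_of_real) (simp add: tendsto_ident_at)
  moreover have "\<forall>\<^sub>F \<epsilon> in at_right (0::real). of_real \<epsilon> * (\<mu> \<epsilon> / of_real \<epsilon>) = \<mu> \<epsilon>"
    using eventually_at_right_less[of 0] by eventually_elim simp
  ultimately show ?thesis by (simp add: Lim_transform_eventually)
qed

theorem proposition4p9:
  fixes S N :: nat and L :: "nat \<Rightarrow> nat" and W :: "nat \<Rightarrow> nat \<Rightarrow> real"
    and k :: nat and \<beta> :: "nat \<Rightarrow> real" and \<gamma> :: real
    and l sl :: nat
    and f\<epsilon> \<mu>\<epsilon> :: "real \<Rightarrow> nat \<Rightarrow> complex" and lamE :: "real \<Rightarrow> complex"
    and f :: "nat \<Rightarrow> complex"
  defines "I \<equiv> {1..N}"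
  defines "D \<equiv> Dmat (int k) \<beta> L S"
  defines "P \<equiv> (\<lambda>\<epsilon>. mat_mul I D (cmat (Weps \<epsilon> W)))"
  assumes S_gt1: "1 < S" and S_le: "S \<le> N"
    and bw: "band_width_vector S N L"
    and adm: "admissible S N L W"
    and k_pos: "0 < k"
    and beta: "\<beta> \<in> Gamma_set S"
    and gamma: "0 < \<gamma>"
    and sl: "sl \<in> {1..S}" and l_in: "l \<in> band_block L sl"
    and f_eig: "\<And>\<epsilon>. 0 < \<epsilon> \<Longrightarrow> \<epsilon> < \<gamma> \<Longrightarrow>
        vnorm I (f\<epsilon> \<epsilon>) = 1 \<and> (\<forall>i\<in>I. mat_vec I (P \<epsilon>) (f\<epsilon> \<epsilon>) i = lamE \<epsilon> * f\<epsilon> \<epsilon> i)"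
    and lam_lim: "(lamE \<longlongrightarrow> exp (- 2 * pi * \<i> * of_nat k * of_real (\<beta> sl))) (at_right 0)"
    and mu_eig: "\<And>\<epsilon>. 0 < \<epsilon> \<Longrightarrow> \<epsilon> < \<gamma> \<Longrightarrow>
        (\<forall>i\<in>I. mat_vec I (adjoint (P \<epsilon>)) (\<mu>\<epsilon> \<epsilon>) i = cnj (lamE \<epsilon>) * \<mu>\<epsilon> \<epsilon> i)
        \<and> cinner I (f\<epsilon> \<epsilon>) (\<mu>\<epsilon> \<epsilon>) = 1"
    and f_lim: "\<And>j. j \<in> I \<Longrightarrow> ((\<lambda>\<epsilon>. f\<epsilon> \<epsilon> j) \<longlongrightarrow> f j) (at_right 0)"
    and mu_lim: "\<And>j. j \<in> I \<Longrightarrow> ((\<lambda>\<epsilon>. \<mu>\<epsilon> \<epsilon> j) \<longlongrightarrow> f j) (at_right 0)"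
    and f_unit: "vnorm I f = 1"
    and f_eigv: "\<exists>lam. \<forall>i\<in>I. mat_vec I (mat_mul I D (cmat (hatW L S W))) f i = lam * f i"
  shows "\<forall>j\<in>I - band_block L sl.
     (let c = 1 / (exp (2 * pi * \<i> * of_nat k * of_real (\<beta> sl))
                    - exp (2 * pi * \<i> * of_nat k * of_real (\<beta> (block_index L S j))))
              * mat_vec I (mat_mul I (cmat W) (\<lambda>a b. cnj (D a b))) f j
      in ((\<lambda>\<epsilon>. (\<mu>\<epsilon> \<epsilon> j - f j) / of_real \<epsilon>) \<longlongrightarrow> c) (at_right 0)
       \<and> ((\<lambda>\<epsilon>. \<mu>\<epsilon> \<epsilon> j / of_real \<epsilon>) \<longlongrightarrow> c) (at_right 0))"
proof
  fix j assume j: "j \<in> I - band_block L sl"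
  have I: "finite I" "j \<in> I" using j unfolding I_def by auto
  define sj where "sj = block_index L S j"
  have sj: "sj \<in> {1..S}" "sj \<noteq> sl"
    using block_index_in_band_block[OF bw, of j] j unfolding sj_def I_def by auto
  define e where "e s = exp (2 * pi * \<i> * of_nat k * of_real (\<beta> s))" for s
  define c where "c = 1 / (e sl - e sj) * mat_vec I (mat_mul I (cmat W) (\<lambda>a b. cnj (D a b))) f j"
  have row: "\<forall>\<^sub>F \<epsilon> in at_right 0. (cnj (lamE \<epsilon>) - e sj) * \<mu>\<epsilon> \<epsilon> j
      = of_real \<epsilon> * mat_vec I (mat_mul I (cmat W) (\<lambda>a b. cnj (D a b))) (\<mu>\<epsilon> \<epsilon>) j"
    using eventually_at_right_real[OF gamma]
  proof eventually_elim
    case (elim \<epsilon>)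
    have "\<And>b. b \<in> I \<Longrightarrow> W b j = W j b" using adm I(2) unfolding admissible_def I_def by auto
    with mu_eig[of \<epsilon>] elim I show ?case
      by (auto simp: P_def D_def mat_vec_adjoint_Dmat_Weps cnj_Dmat_diag e_def sj_def algebra_simps)
  qed
  have "((\<lambda>\<epsilon>. cnj (lamE \<epsilon>)) \<longlongrightarrow> e sl) (at_right 0)"
    using tendsto_cnj[OF lam_lim] by (simp add: e_def cnj_exp)
  then have mu_quotient: "((\<lambda>\<epsilon>. \<mu>\<epsilon> \<epsilon> j / of_real \<epsilon>) \<longlongrightarrow> c) (at_right 0)"
    using tendsto_quotient_at_right_0[OF row _ _ tendsto_mat_vec[OF I(1) mu_lim]]
      Gamma_set_exp_neq[OF beta k_pos sl sj(1) sj(2)[symmetric]]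
    by (simp add: c_def e_def)
  have "f j = 0"
    using tendsto_unique[OF _ mu_lim[OF I(2)] tendsto_zero_of_quotient_at_right_0[OF mu_quotient]]
    by simp
  then show "let c = 1 / (exp (2 * pi * \<i> * of_nat k * of_real (\<beta> sl))
                    - exp (2 * pi * \<i> * of_nat k * of_real (\<beta> (block_index L S j))))
              * mat_vec I (mat_mul I (cmat W) (\<lambda>a b. cnj (D a b))) f j
      in ((\<lambda>\<epsilon>. (\<mu>\<epsilon> \<epsilon> j - f j) / of_real \<epsilon>) \<longlongrightarrow> c) (at_right 0)
       \<and> ((\<lambda>\<epsilon>. \<mu>\<epsilon> \<epsilon> j / of_real \<epsilon>) \<longlongrightarrow> c) (at_right 0)"
    using mu_quotient unfolding c_def e_def sj_def Let_def by simp
qed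

end
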